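(* Assume $n>3t+2d$. In any execution of Algorithm 1, if a correct process $p_i$ mbrb-broadcasts an app-message $m$ with sequence number $sn$, then at least one correct process eventually mbrb-delivers $m$ from $p_i$ with sequence number $sn$.
   Context: System model. There are $n$ asynchronous processes $p_1,\dots,p_n$ with distinct known identities. Up to $t$ are Byzantine (arbitrary behavior); the rest are correct; $c$ is the number of correct processes in the execution, $n-t\le c\le n$. The network is fully connected, asynchronous, never corrupts/duplicates/creates messages; "broadcast $M$" sends $M$ to all $n$ processes; a message adversary may suppress, per broadcast by a correct process, up to $d$ ($0\le d<c$) copies addressed to correct processes, all other copies among correct processes being eventually received. Signatures are unforgeable and public keys are known. Algorithm 1 (code for $p_i$). Each process stores, for each triplet $(m,sn,j)$, a set of saved valid signatures of that triplet, at most one per signer. On $\mathrm{mbrb\_broadcast}(m,sn)$: $p_i$ saves its own signature of $(m,sn,i)$ and broadcasts $\mathrm{BUNDLE}(m,sn,i,S)$, $S$ the saved signatures for $(m,sn,i)$. On receiving $\mathrm{BUNDLE}(m,sn,j,sigs)$: if $p_i$ has not already mbrb-delivered some $(-,sn,j)$ and $sigs$ contains a valid signature of $(m,sn,j)$ by $p_j$, then: (1) save all new valid signatures of $(m,sn,j)$ in $sigs$; (2) if $p_i$ has not yet signed any $(-,sn,j)$, save its own signature of $(m,sn,j)$ and broadcast $\mathrm{BUNDLE}(m,sn,j,\text{all saved signatures for }(m,sn,j))$; (3) if strictly more than $\frac{n+t}{2}$ signatures for $(m,sn,j)$ are saved, broadcast $\mathrm{BUNDLE}(m,sn,j,\text{all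 saved signatures})$ and mbrb-deliver $(m,sn,j)$. A correct process never uses the same sequence number twice. *)

theory Defs
  imports Main
begin

text \<open>
  Processes are identified by 0..<n.  An app-message has type 'm, sequence
  numbers are nat, a triplet is (m, sn, j).  Signatures are symbolic: a
  signature is a pair (k, T) meaning "signature of triplet T by process k".
  Unforgeability is enforced on the messages Byzantine processes may send.
\<close>

type_synonym 'm triplet = "'m \<times> nat \<times> nat"
type_synonym 'm sig = "nat \<times> 'm triplet"

datatype 'm msg = BUNDLE 'm nat nat "'m sig set"

record 'm lstate =
  saved     :: "'m triplet \<Rightarrow> nat set"   \<comment> \<open>signers of the saved valid signatures of each triplet\<close>
  signedsn  :: "(nat \<times> nat) set"          \<comment> \<open>pairs (sn, j) such that the process signed some (-, sn, j)\<close>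
  delivered :: "'m triplet set"
  bcasts    :: "('m \<times> nat) set"

text \<open>A network copy: (message id, sender, destination, message).\<close>
type_synonym 'm copy = "(nat \<times> nat) \<times> nat \<times> nat \<times> 'm msg"

record 'm gstate =
  loc :: "nat \<Rightarrow> 'm lstate"
  net :: "'m copy set"

definition lstate0 :: "'m lstate" where
  "lstate0 = \<lparr>saved = (\<lambda>_. {}), signedsn = {}, delivered = {}, bcasts = {}\<rparr>"

definition gstate0 :: "'m gstate" where
  "gstate0 = \<lparr>loc = (\<lambda>_. lstate0), net = {}\<rparr>"

definition sigs_of :: "nat set \<Rightarrow> 'm triplet \<Rightarrow> 'm sig set" where
  "sigs_of S T = (\<lambda>k. (k, T)) ` S"

definition bcast_handler :: "nat \<Rightarrow> 'm \<Rightarrow> nat \<Rightarrow> 'm lstate \<Rightarrow> 'm lstate \<times> 'm msg list" where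
  "bcast_handler i m sn L =
     (let T = (m, sn, i);
          L1 = L\<lparr>saved := (saved L)(T := insert i (saved L T)),
                 signedsn := insert (sn, i) (signedsn L),
                 bcasts := insert (m, sn) (bcasts L)\<rparr>
      in (L1, [BUNDLE m sn i (sigs_of (saved L1 T) T)]))"

text \<open>Code executed by p_i on receipt of BUNDLE(m, sn, j, sigs), n processes, threshold t.
  "strictly more than (n+t)/2 signatures" is written 2 * card > n + t.\<close>
definition recv_handler :: "nat \<Rightarrow> nat \<Rightarrow> nat \<Rightarrow> 'm msg \<Rightarrow> 'm lstate \<Rightarrow> 'm lstate \<times> 'm msg list" where
  "recv_handler n t i M L =
     (case M of BUNDLE m sn j sigs \<Rightarrow>
       (let T = (m, sn, j) in
        if (\<exists>m'. (m', sn, j) \<in> delivered L) \<or> \<not> (j < n \<and> (j, T) \<in> sigs) then (L, [])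
        else
          (let L1 = L\<lparr>saved := (saved L)(T := saved L T \<union> {k. k < n \<and> (k, T) \<in> sigs})\<rparr>;
               (L2, b2) = (if (sn, j) \<notin> signedsn L1 then
                             (let L' = L1\<lparr>saved := (saved L1)(T := insert i (saved L1 T)),
                                          signedsn := insert (sn, j) (signedsn L1)\<rparr>
                              in (L', [BUNDLE m sn j (sigs_of (saved L' T) T)]))
                           else (L1, []))
           in if 2 * card (saved L2 T) > n + t
              then (L2\<lparr>delivered := insert T (delivered L2)\<rparr>,
                    b2 @ [BUNDLE m sn j (sigs_of (saved L2 T) T)])
              else (L2, b2))))"

text \<open>Copies put in the network at step k by correct sender p_i broadcasting the list ms,
  where Ds ! b is the set of correct destinations whose copy of the b-th broadcast is
  suppressed by the message adversary (copies to Byzantine processes are irrelevant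
  and omitted).\<close>
definition copies :: "nat set \<Rightarrow> nat \<Rightarrow> nat \<Rightarrow> 'm msg list \<Rightarrow> nat set list \<Rightarrow> 'm copy set" where
  "copies C k i ms Ds =
     {((k, b), i, dst, ms ! b) | b dst. b < length ms \<and> dst \<in> C - Ds ! b}"

definition adv_ok :: "nat set \<Rightarrow> nat \<Rightarrow> 'm msg list \<Rightarrow> nat set list \<Rightarrow> bool" where
  "adv_ok C d ms Ds \<longleftrightarrow> length Ds = length ms \<and> (\<forall>D\<in>set Ds. D \<subseteq> C \<and> card D \<le> d)"

definition step :: "nat \<Rightarrow> nat \<Rightarrow> nat \<Rightarrow> nat set \<Rightarrow> nat \<Rightarrow> 'm gstate \<Rightarrow> 'm gstate \<Rightarrow> bool" where
  "step n t d C k s s' \<longleftrightarrow>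
     \<comment> \<open>a correct process invokes mbrb_broadcast with a fresh sequence number\<close>
     (\<exists>i m sn L' ms Ds. i \<in> C \<and> sn \<notin> snd ` bcasts (loc s i) \<and>
        bcast_handler i m sn (loc s i) = (L', ms) \<and> adv_ok C d ms Ds \<and>
        s' = \<lparr>loc = (loc s)(i := L'), net = net s \<union> copies C k i ms Ds\<rparr>)
   \<or> \<comment> \<open>a correct process receives a message copy\<close>
     (\<exists>x\<in>net s. \<exists>idx sndr i M L' ms Ds. x = (idx, sndr, i, M) \<and> i \<in> C \<and>
        recv_handler n t i M (loc s i) = (L', ms) \<and> adv_ok C d ms Ds \<and>
        s' = \<lparr>loc = (loc s)(i := L'), net = (net s - {x}) \<union> copies C k i ms Ds\<rparr>)
   \<or> \<comment> \<open>a Byzantine process sends an arbitrary BUNDLE to a correct process;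
         it can only include signatures of correct processes they have produced\<close>
     (\<exists>b i m sn j sigs. b < n \<and> b \<notin> C \<and> i \<in> C \<and>
        (\<forall>(k, T)\<in>sigs. k \<in> C \<longrightarrow> k \<in> saved (loc s k) T) \<and>
        s' = s\<lparr>net := insert ((k, 0), b, i, BUNDLE m sn j sigs) (net s)\<rparr>)
   \<or> \<comment> \<open>nothing happens\<close>
     s' = s"

text \<open>Fairness: every copy sent by a
  correct process (and not suppressed) is eventually received.\<close>
definition mbrb_exec :: "nat \<Rightarrow> nat \<Rightarrow> nat \<Rightarrow> nat set \<Rightarrow> (nat \<Rightarrow> 'm gstate) \<Rightarrow> bool" where
  "mbrb_exec n t d C s \<longleftrightarrow>
     C \<subseteq> {..<n} \<and> n - t \<le> card C \<and> d < card C \<and>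
     s 0 = gstate0 \<and>
     (\<forall>k. step n t d C k (s k) (s (Suc k))) \<and>
     (\<forall>k x. x \<in> net (s k) \<longrightarrow> fst (snd x) \<in> C \<longrightarrow> (\<exists>k'\<ge>k. x \<notin> net (s k')))"

end

theory Submission
  imports Defs
begin

text \<open>
  Suppose no correct process ever delivers (m, sn, i). When a correct process p first signs this
  triplet it broadcasts a bundle carrying its own signature and that of p_i, and the message
  adversary hides it from at most d of the c correct processes. Every other correct process accepts
  the bundle (it cannot have delivered (m', sn, i) for some m' \<noteq> m, because p_i signs only one
  message per sequence number), saves p's signature and signs the triplet itself. So the set S of
  correct signers contains i, and the signature of each member of S eventually reaches at least
  c - d members of S. Double counting yields a correct process holding c - d signatures, and
  c - d > (n + t)/2 since n > 3t + 2d; that process delivers, a contradiction.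
\<close>

lemma bcast_handler_eq:
  "bcast_handler i m sn L =
     (L\<lparr>saved := (saved L)((m, sn, i) := insert i (saved L (m, sn, i))),
        signedsn := insert (sn, i) (signedsn L),
        bcasts := insert (m, sn) (bcasts L)\<rparr>,
      [BUNDLE m sn i (sigs_of (insert i (saved L (m, sn, i))) (m, sn, i))])"
  unfolding bcast_handler_def Let_def by simp

definition recv_accepts :: "nat \<Rightarrow> 'm \<Rightarrow> nat \<Rightarrow> nat \<Rightarrow> 'm sig set \<Rightarrow> 'm lstate \<Rightarrow> bool" where
  "recv_accepts n m sn j sigs L \<longleftrightarrow>
     (\<nexists>m'. (m', sn, j) \<in> delivered L) \<and> j < n \<and> (j, (m, sn, j)) \<in> sigs"

definition recv_saved :: "nat \<Rightarrow> nat \<Rightarrow> 'm \<Rightarrow> nat \<Rightarrow> nat \<Rightarrow> 'm sig set \<Rightarrow> 'm lstate \<Rightarrow> nat set" where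
  "recv_saved n q m sn j sigs L =
     saved L (m, sn, j) \<union> {k. k < n \<and> (k, (m, sn, j)) \<in> sigs}
       \<union> (if (sn, j) \<in> signedsn L then {} else {q})"

lemma recv_handler_BUNDLE:
  "recv_handler n t q (BUNDLE m sn j sigs) L =
     (if \<not> recv_accepts n m sn j sigs L then (L, []) else
      (let A = recv_saved n q m sn j sigs L; sign = ((sn, j) \<notin> signedsn L);
           deliver = (n + t < 2 * card A); B = BUNDLE m sn j (sigs_of A (m, sn, j)) in
       (L\<lparr>saved := (saved L)((m, sn, j) := A),
          signedsn := (if sign then insert (sn, j) (signedsn L) else signedsn L),
          delivered := (if deliver then insert (m, sn, j) (delivered L) else delivered L)\<rparr>,
        (if sign then [B] else []) @ (if deliver then [B] else []))))"
  unfolding recv_handler_def recv_accepts_def recv_saved_def Let_def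
  by (auto split: if_splits simp: insert_absorb Un_commute)

lemma recv_handler_accepted:
  assumes "recv_accepts n m sn j sigs L"
    and "recv_handler n t q (BUNDLE m sn j sigs) L = (L', ms)"
  defines "A \<equiv> recv_saved n q m sn j sigs L"
  shows "saved L' = (saved L)((m, sn, j) := A)"
    and "bcasts L' = bcasts L"
    and "signedsn L' = insert (sn, j) (signedsn L)"
    and "delivered L' = (if n + t < 2 * card A then insert (m, sn, j) (delivered L) else delivered L)"
    and "set ms \<subseteq> {BUNDLE m sn j (sigs_of A (m, sn, j))}"
  using assms by (auto simp: recv_handler_BUNDLE Let_def split: if_splits)

fun bundle_sigs :: "'m msg \<Rightarrow> 'm sig set" where
  "bundle_sigs (BUNDLE _ _ _ sigs) = sigs"

abbreviation copy_msg :: "'m copy \<Rightarrow> 'm msg" where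
  "copy_msg x \<equiv> snd (snd (snd x))"

lemma copy_msg_in_copies: "x \<in> copies C k i ms Ds \<Longrightarrow> copy_msg x \<in> set ms"
  unfolding copies_def by auto

(* The escape clause card \<le> 1 of the last conjunct is needed because mbrb_broadcast saves the
   sender's own signature without testing the delivery threshold. *)
definition mbrb_inv :: "nat \<Rightarrow> nat \<Rightarrow> nat set \<Rightarrow> 'm gstate \<Rightarrow> bool" where
  "mbrb_inv n t C st \<longleftrightarrow>
     (\<forall>q\<in>C. \<forall>T. saved (loc st q) T \<subseteq> {..<n}) \<and>
     (\<forall>q\<in>C. \<forall>p\<in>C. \<forall>T. p \<in> saved (loc st q) T \<longrightarrow> p \<in> saved (loc st p) T) \<and>
     (\<forall>x\<in>net st. \<forall>p\<in>C. \<forall>T. (p, T) \<in> bundle_sigs (copy_msg x) \<longrightarrow> p \<in> saved (loc st p) T) \<and>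
     (\<forall>p\<in>C. \<forall>m sn. saved (loc st p) (m, sn, p) \<noteq> {} \<longrightarrow> (m, sn) \<in> bcasts (loc st p)) \<and>
     (\<forall>p\<in>C. \<forall>m sn. (m, sn) \<in> bcasts (loc st p) \<longrightarrow> p \<in> saved (loc st p) (m, sn, p)) \<and>
     (\<forall>p\<in>C. \<forall>m m' sn. (m, sn) \<in> bcasts (loc st p) \<longrightarrow> (m', sn) \<in> bcasts (loc st p) \<longrightarrow> m = m') \<and>
     (\<forall>q\<in>C. \<forall>m sn j. (m, sn, j) \<in> delivered (loc st q) \<longrightarrow> j \<in> saved (loc st q) (m, sn, j)) \<and>
     (\<forall>q\<in>C. \<forall>sn j. (sn, j) \<in> signedsn (loc st q) \<longrightarrow>
        (\<exists>m. q \<in> saved (loc st q) (m, sn, j) \<and> j \<in> saved (loc st q) (m, sn, j))) \<and>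
     (\<forall>q\<in>C. \<forall>m sn j. n + t < 2 * card (saved (loc st q) (m, sn, j)) \<longrightarrow>
        (\<exists>m'. (m', sn, j) \<in> delivered (loc st q)) \<or> card (saved (loc st q) (m, sn, j)) \<le> 1)"

lemma mbrb_invD:
  assumes "mbrb_inv n t C st"
  shows saved_range: "q \<in> C \<Longrightarrow> saved (loc st q) T \<subseteq> {..<n}"
    and saved_signer_signed: "q \<in> C \<Longrightarrow> p \<in> C \<Longrightarrow> p \<in> saved (loc st q) T \<Longrightarrow> p \<in> saved (loc st p) T"
    and net_signer_signed: "x \<in> net st \<Longrightarrow> p \<in> C \<Longrightarrow> (p, T) \<in> bundle_sigs (copy_msg x) \<Longrightarrow>
          p \<in> saved (loc st p) T"
    and saved_own_bcast: "p \<in> C \<Longrightarrow> saved (loc st p) (m, sn, p) \<noteq> {} \<Longrightarrow> (m, sn) \<in> bcasts (loc st p)"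
    and bcast_saved_own: "p \<in> C \<Longrightarrow> (m, sn) \<in> bcasts (loc st p) \<Longrightarrow> p \<in> saved (loc st p) (m, sn, p)"
    and bcast_sn_unique: "p \<in> C \<Longrightarrow> (m, sn) \<in> bcasts (loc st p) \<Longrightarrow> (m', sn) \<in> bcasts (loc st p) \<Longrightarrow> m = m'"
    and delivered_sender_saved: "q \<in> C \<Longrightarrow> (m, sn, j) \<in> delivered (loc st q) \<Longrightarrow>
          j \<in> saved (loc st q) (m, sn, j)"
    and signedsn_saved: "q \<in> C \<Longrightarrow> (sn, j) \<in> signedsn (loc st q) \<Longrightarrow>
          \<exists>m. q \<in> saved (loc st q) (m, sn, j) \<and> j \<in> saved (loc st q) (m, sn, j)"
    and above_threshold_delivered: "q \<in> C \<Longrightarrow> n + t < 2 * card (saved (loc st q) (m, sn, j)) \<Longrightarrow>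
          (\<exists>m'. (m', sn, j) \<in> delivered (loc st q)) \<or> card (saved (loc st q) (m, sn, j)) \<le> 1"
  using assms unfolding mbrb_inv_def by - (elim conjE, meson)+

lemma mbrb_invI:
  assumes "\<And>q T. q \<in> C \<Longrightarrow> saved (loc st q) T \<subseteq> {..<n}"
    and "\<And>q p T. q \<in> C \<Longrightarrow> p \<in> C \<Longrightarrow> p \<in> saved (loc st q) T \<Longrightarrow> p \<in> saved (loc st p) T"
    and "\<And>x p T. x \<in> net st \<Longrightarrow> p \<in> C \<Longrightarrow> (p, T) \<in> bundle_sigs (copy_msg x) \<Longrightarrow>
          p \<in> saved (loc st p) T"
    and "\<And>p m sn. p \<in> C \<Longrightarrow> saved (loc st p) (m, sn, p) \<noteq> {} \<Longrightarrow> (m, sn) \<in> bcasts (loc st p)"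
    and "\<And>p m sn. p \<in> C \<Longrightarrow> (m, sn) \<in> bcasts (loc st p) \<Longrightarrow> p \<in> saved (loc st p) (m, sn, p)"
    and "\<And>p m m' sn. p \<in> C \<Longrightarrow> (m, sn) \<in> bcasts (loc st p) \<Longrightarrow> (m', sn) \<in> bcasts (loc st p) \<Longrightarrow> m = m'"
    and "\<And>q m sn j. q \<in> C \<Longrightarrow> (m, sn, j) \<in> delivered (loc st q) \<Longrightarrow> j \<in> saved (loc st q) (m, sn, j)"
    and "\<And>q sn j. q \<in> C \<Longrightarrow> (sn, j) \<in> signedsn (loc st q) \<Longrightarrow>
          \<exists>m. q \<in> saved (loc st q) (m, sn, j) \<and> j \<in> saved (loc st q) (m, sn, j)"
    and "\<And>q m sn j. q \<in> C \<Longrightarrow> n + t < 2 * card (saved (loc st q) (m, sn, j)) \<Longrightarrow>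
          (\<exists>m'. (m', sn, j) \<in> delivered (loc st q)) \<or> card (saved (loc st q) (m, sn, j)) \<le> 1"
  shows "mbrb_inv n t C st"
  unfolding mbrb_inv_def by (intro conjI ballI allI impI; fact assms)

lemma mbrb_inv_gstate0: "mbrb_inv n t C gstate0"
  unfolding mbrb_inv_def gstate0_def lstate0_def by simp

lemma mbrb_inv_same_loc:
  assumes I: "mbrb_inv n t C st" and L: "loc st' = loc st"
    and N: "\<And>x p T. x \<in> net st' \<Longrightarrow> x \<notin> net st \<Longrightarrow> p \<in> C \<Longrightarrow> (p, T) \<in> bundle_sigs (copy_msg x) \<Longrightarrow>
          p \<in> saved (loc st p) T"
  shows "mbrb_inv n t C st'"
proof (rule mbrb_invI)
  fix x p T assume "x \<in> net st'" "p \<in> C" "(p, T) \<in> bundle_sigs (copy_msg x)"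
  then show "p \<in> saved (loc st' p) T" using N net_signer_signed[OF I] unfolding L by blast
qed (simp only: L, meson mbrb_invD[OF I])+

lemma mbrb_inv_bcast:
  assumes I: "mbrb_inv n t C st" and CN: "C \<subseteq> {..<n}" and iC: "i \<in> C"
    and fresh: "sn \<notin> snd ` bcasts (loc st i)"
    and h: "bcast_handler i m sn (loc st i) = (L', ms)"
    and st': "st' = \<lparr>loc = (loc st)(i := L'), net = net st \<union> copies C k i ms Ds\<rparr>"
  shows "mbrb_inv n t C st'"
proof -
  let ?T = "(m, sn, i)"
  have fresh': "(m', sn) \<notin> bcasts (loc st i)" for m' using fresh by force
  have empty: "saved (loc st i) ?T = {}" using saved_own_bcast[OF I iC] fresh' by blast
  have SV: "saved (loc st' q) T = (if q = i \<and> T = ?T then {i} else saved (loc st q) T)" for q T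
    using st' h empty by (auto simp: bcast_handler_eq)
  have BC: "bcasts (loc st' q) = (if q = i then insert (m, sn) (bcasts (loc st q)) else bcasts (loc st q))" for q
    using st' h by (auto simp: bcast_handler_eq)
  have DL: "delivered (loc st' q) = delivered (loc st q)" for q
    using st' h by (auto simp: bcast_handler_eq)
  have SG: "signedsn (loc st' q) = (if q = i then insert (sn, i) (signedsn (loc st q)) else signedsn (loc st q))" for q
    using st' h by (auto simp: bcast_handler_eq)
  have mono: "saved (loc st q) T \<subseteq> saved (loc st' q) T" for q T
    using SV empty by auto
  have new_sigs: "x \<in> net st' \<Longrightarrow> x \<notin> net st \<Longrightarrow> bundle_sigs (copy_msg x) = sigs_of {i} ?T" for x
    using st' h empty copy_msg_in_copies[of x C k i ms Ds] by (auto simp: bcast_handler_eq)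
  show ?thesis
  proof (rule mbrb_invI)
    fix q T assume "q \<in> C" then show "saved (loc st' q) T \<subseteq> {..<n}"
      using SV saved_range[OF I] iC CN by auto
  next
    fix q p T assume q: "q \<in> C" and p: "p \<in> C" and pq: "p \<in> saved (loc st' q) T"
    show "p \<in> saved (loc st' p) T"
    proof (cases "q = i \<and> T = ?T")
      case True then show ?thesis using pq SV by auto
    next
      case False
      then have "p \<in> saved (loc st q) T" using pq SV by auto
      then show ?thesis using saved_signer_signed[OF I q p] mono by blast
    qed
  next
    fix x p T assume x: "x \<in> net st'" and p: "p \<in> C" and sig: "(p, T) \<in> bundle_sigs (copy_msg x)"
    show "p \<in> saved (loc st' p) T"
    proof (cases "x \<in> net st")
      case True then show ?thesis using net_signer_signed[OF I True p sig] mono by blast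
    next
      case False
      then have "T = ?T" "p = i" using sig new_sigs[OF x] by (auto simp: sigs_of_def)
      then show ?thesis using SV by auto
    qed
  next
    fix p m' sn' assume p: "p \<in> C" and ne: "saved (loc st' p) (m', sn', p) \<noteq> {}"
    show "(m', sn') \<in> bcasts (loc st' p)"
    proof (cases "p = i \<and> (m', sn', p) = ?T")
      case True then show ?thesis using BC by auto
    next
      case False
      then have "saved (loc st p) (m', sn', p) \<noteq> {}" using ne SV by auto
      then show ?thesis using saved_own_bcast[OF I p] BC by auto
    qed
  next
    fix p m' sn' assume p: "p \<in> C" and b: "(m', sn') \<in> bcasts (loc st' p)"
    show "p \<in> saved (loc st' p) (m', sn', p)"
    proof (cases "p = i \<and> (m', sn') = (m, sn)")
      case True then show ?thesis using SV by auto
    next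
      case False
      then have "(m', sn') \<in> bcasts (loc st p)" using b BC by (auto split: if_splits)
      then show ?thesis using bcast_saved_own[OF I p] mono by blast
    qed
  next
    fix p m1 m2 sn' assume p: "p \<in> C"
      and b1: "(m1, sn') \<in> bcasts (loc st' p)" and b2: "(m2, sn') \<in> bcasts (loc st' p)"
    show "m1 = m2"
    proof (cases "p = i \<and> sn' = sn")
      case True then show ?thesis using b1 b2 BC fresh' by auto
    next
      case False
      then have "(m1, sn') \<in> bcasts (loc st p)" "(m2, sn') \<in> bcasts (loc st p)"
        using b1 b2 BC by (auto split: if_splits)
      then show ?thesis by (rule bcast_sn_unique[OF I p])
    qed
  next
    fix q m' sn' j assume "q \<in> C" "(m', sn', j) \<in> delivered (loc st' q)"
    then show "j \<in> saved (loc st' q) (m', sn', j)"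
      using DL delivered_sender_saved[OF I] mono by blast
  next
    fix q sn' j assume q: "q \<in> C" and sg: "(sn', j) \<in> signedsn (loc st' q)"
    show "\<exists>m'. q \<in> saved (loc st' q) (m', sn', j) \<and> j \<in> saved (loc st' q) (m', sn', j)"
    proof (cases "q = i \<and> (sn', j) = (sn, i)")
      case True then show ?thesis using SV by auto
    next
      case False
      then have "(sn', j) \<in> signedsn (loc st q)" using sg SG by (auto split: if_splits)
      then show ?thesis using signedsn_saved[OF I q] mono by blast
    qed
  next
    fix q m' sn' j assume q: "q \<in> C" and big: "n + t < 2 * card (saved (loc st' q) (m', sn', j))"
    show "(\<exists>m''. (m'', sn', j) \<in> delivered (loc st' q)) \<or> card (saved (loc st' q) (m', sn', j)) \<le> 1"
    proof (cases "q = i \<and> (m', sn', j) = ?T")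
      case True then show ?thesis using SV by auto
    next
      case False
      then have "saved (loc st' q) (m', sn', j) = saved (loc st q) (m', sn', j)" using SV by auto
      then show ?thesis using big above_threshold_delivered[OF I q] DL by auto
    qed
  qed
qed

lemma recv_saved_signer_signed:
  assumes I: "mbrb_inv n t C st" and x: "x \<in> net st" and M: "copy_msg x = BUNDLE m sn j sigs"
    and q: "q \<in> C" and p: "p \<in> C" and pA: "p \<in> recv_saved n q m sn j sigs (loc st q)"
  shows "p = q \<or> p \<in> saved (loc st p) (m, sn, j)"
  using pA saved_signer_signed[OF I q p] net_signer_signed[OF I x p] M
  unfolding recv_saved_def by (auto split: if_splits)

lemma mbrb_inv_recv:
  assumes I: "mbrb_inv n t C st" and CN: "C \<subseteq> {..<n}" and x: "x \<in> net st"
    and M: "copy_msg x = BUNDLE m0 sn0 j0 sigs" and q0: "q0 \<in> C"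
    and h: "recv_handler n t q0 (BUNDLE m0 sn0 j0 sigs) (loc st q0) = (L', ms)"
    and st': "st' = \<lparr>loc = (loc st)(q0 := L'), net = (net st - {x}) \<union> copies C k q0 ms Ds\<rparr>"
  shows "mbrb_inv n t C st'"
proof (cases "recv_accepts n m0 sn0 j0 sigs (loc st q0)")
  case False
  then have "L' = loc st q0" "ms = []" using h by (simp_all add: recv_handler_BUNDLE)
  then show ?thesis using st' by (intro mbrb_inv_same_loc[OF I]) (auto simp: copies_def)
next
  case acc: True
  let ?T = "(m0, sn0, j0)"
  define A where "A = recv_saved n q0 m0 sn0 j0 sigs (loc st q0)"
  note eff = recv_handler_accepted[OF acc h, folded A_def]
  have acc': "\<nexists>m'. (m', sn0, j0) \<in> delivered (loc st q0)" "j0 < n" "(j0, ?T) \<in> sigs"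
    using acc unfolding recv_accepts_def by auto
  have A_sup: "saved (loc st q0) ?T \<subseteq> A" "j0 \<in> A"
    and A_new: "(sn0, j0) \<notin> signedsn (loc st q0) \<Longrightarrow> q0 \<in> A"
    using acc' unfolding A_def recv_saved_def by auto
  have SV: "saved (loc st' q) T = (if q = q0 \<and> T = ?T then A else saved (loc st q) T)" for q T
    using st' eff(1) by auto
  have BC: "bcasts (loc st' q) = bcasts (loc st q)" for q
    using st' eff(2) by auto
  have SG: "signedsn (loc st' q) = (if q = q0 then insert (sn0, j0) (signedsn (loc st q)) else signedsn (loc st q))" for q
    using st' eff(3) by auto
  have DL: "delivered (loc st' q) = (if q = q0 \<and> n + t < 2 * card A then insert ?T (delivered (loc st q)) else delivered (loc st q))" for q
    using st' eff(4) by auto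
  have mono: "saved (loc st q) T \<subseteq> saved (loc st' q) T" for q T
    using SV A_sup by auto
  have new_sigs: "y \<in> net st' \<Longrightarrow> y \<notin> net st \<Longrightarrow> bundle_sigs (copy_msg y) = sigs_of A ?T" for y
    using st' eff(5) copy_msg_in_copies[of y C k q0 ms Ds] by auto
  have A_signed: "p \<in> saved (loc st' p) ?T" if "p \<in> C" "p \<in> A" for p
    using recv_saved_signer_signed[OF I x M q0 that(1) that(2)[unfolded A_def]] mono SV that(2) by auto
  show ?thesis
  proof (rule mbrb_invI)
    fix q T assume q: "q \<in> C"
    have "A \<subseteq> {..<n}" using saved_range[OF I q0] q0 CN unfolding A_def recv_saved_def by auto
    then show "saved (loc st' q) T \<subseteq> {..<n}" using SV saved_range[OF I q] by auto
  next
    fix q p T assume q: "q \<in> C" and p: "p \<in> C" and pq: "p \<in> saved (loc st' q) T"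
    show "p \<in> saved (loc st' p) T"
    proof (cases "q = q0 \<and> T = ?T")
      case True then show ?thesis using pq SV A_signed p by auto
    next
      case False
      then have "p \<in> saved (loc st q) T" using pq SV by auto
      then show ?thesis using saved_signer_signed[OF I q p] mono by blast
    qed
  next
    fix y p T assume y: "y \<in> net st'" and p: "p \<in> C" and sig: "(p, T) \<in> bundle_sigs (copy_msg y)"
    show "p \<in> saved (loc st' p) T"
    proof (cases "y \<in> net st")
      case True then show ?thesis using net_signer_signed[OF I True p sig] mono by blast
    next
      case False
      then have "T = ?T" "p \<in> A" using sig new_sigs[OF y] by (auto simp: sigs_of_def)
      then show ?thesis using A_signed p by auto
    qed
  next
    fix p m sn assume p: "p \<in> C" and ne: "saved (loc st' p) (m, sn, p) \<noteq> {}"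
    show "(m, sn) \<in> bcasts (loc st' p)"
    proof (cases "p = q0 \<and> (m, sn, p) = ?T")
      case True
      then have "(p, ?T) \<in> bundle_sigs (copy_msg x)" using acc' M by auto
      then have "saved (loc st p) (m, sn, p) \<noteq> {}" using net_signer_signed[OF I x p] True by auto
      then show ?thesis using saved_own_bcast[OF I p] BC by auto
    next
      case False
      then have "saved (loc st p) (m, sn, p) \<noteq> {}" using ne SV by (auto split: if_splits)
      then show ?thesis using saved_own_bcast[OF I p] BC by auto
    qed
  next
    fix p m sn assume "p \<in> C" "(m, sn) \<in> bcasts (loc st' p)"
    then show "p \<in> saved (loc st' p) (m, sn, p)" using bcast_saved_own[OF I] BC mono by blast
  next
    fix p m m' sn assume "p \<in> C" "(m, sn) \<in> bcasts (loc st' p)" "(m', sn) \<in> bcasts (loc st' p)"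
    then show "m = m'" using bcast_sn_unique[OF I] BC by blast
  next
    fix q m sn j assume q: "q \<in> C" and d: "(m, sn, j) \<in> delivered (loc st' q)"
    show "j \<in> saved (loc st' q) (m, sn, j)"
    proof (cases "q = q0 \<and> (m, sn, j) = ?T")
      case True then show ?thesis using SV A_sup by auto
    next
      case False
      then have "(m, sn, j) \<in> delivered (loc st q)" using d DL by (auto split: if_splits)
      then show ?thesis using delivered_sender_saved[OF I q] mono by blast
    qed
  next
    fix q sn j assume q: "q \<in> C" and sg: "(sn, j) \<in> signedsn (loc st' q)"
    show "\<exists>m. q \<in> saved (loc st' q) (m, sn, j) \<and> j \<in> saved (loc st' q) (m, sn, j)"
    proof (cases "q = q0 \<and> (sn, j) = (sn0, j0) \<and> (sn0, j0) \<notin> signedsn (loc st q0)")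
      case True then show ?thesis using SV A_sup A_new by auto
    next
      case False
      then have "(sn, j) \<in> signedsn (loc st q)" using sg SG by (auto split: if_splits)
      then show ?thesis using signedsn_saved[OF I q] mono by blast
    qed
  next
    fix q m sn j assume q: "q \<in> C" and big: "n + t < 2 * card (saved (loc st' q) (m, sn, j))"
    show "(\<exists>m'. (m', sn, j) \<in> delivered (loc st' q)) \<or> card (saved (loc st' q) (m, sn, j)) \<le> 1"
    proof (cases "q = q0 \<and> (m, sn, j) = ?T")
      case True then show ?thesis using big SV DL by auto
    next
      case False
      then have eq: "saved (loc st' q) (m, sn, j) = saved (loc st q) (m, sn, j)" using SV by auto
      then have "(\<exists>m'. (m', sn, j) \<in> delivered (loc st q)) \<or> card (saved (loc st q) (m, sn, j)) \<le> 1"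
        using big above_threshold_delivered[OF I q] by simp
      then show ?thesis using eq DL by auto
    qed
  qed
qed

lemma mbrb_inv_step:
  assumes I: "mbrb_inv n t C st" and CN: "C \<subseteq> {..<n}" and S: "step n t d C k st st'"
  shows "mbrb_inv n t C st'"
  using S unfolding step_def
proof (elim disjE exE conjE bexE)
  fix i m sn L' ms Ds
  assume "i \<in> C" "sn \<notin> snd ` bcasts (loc st i)" "bcast_handler i m sn (loc st i) = (L', ms)"
    "st' = \<lparr>loc = (loc st)(i := L'), net = net st \<union> copies C k i ms Ds\<rparr>"
  then show ?thesis by (rule mbrb_inv_bcast[OF I CN])
next
  fix x idx sndr i M L' ms Ds
  assume x: "x \<in> net st" "x = (idx, sndr, i, M)" and "i \<in> C"
    and h: "recv_handler n t i M (loc st i) = (L', ms)"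
    and "st' = \<lparr>loc = (loc st)(i := L'), net = (net st - {x}) \<union> copies C k i ms Ds\<rparr>"
  moreover obtain m sn j sigs where "M = BUNDLE m sn j sigs" by (cases M)
  ultimately show ?thesis using mbrb_inv_recv[OF I CN x(1)] by simp
next
  fix b i m sn j sigs
  assume "\<forall>(k, T)\<in>sigs. k \<in> C \<longrightarrow> k \<in> saved (loc st k) T"
    and "st' = st\<lparr>net := insert ((k, 0), b, i, BUNDLE m sn j sigs) (net st)\<rparr>"
  then show ?thesis by (intro mbrb_inv_same_loc[OF I]) auto
qed (use I in simp)

lemma step_local_mono:
  assumes "step n t d C k st st'"
  shows "saved (loc st q) T \<subseteq> saved (loc st' q) T"
    and "bcasts (loc st q) \<subseteq> bcasts (loc st' q)"
proof -
  have "saved (loc st q) T \<subseteq> saved (loc st' q) T \<and> bcasts (loc st q) \<subseteq> bcasts (loc st' q)"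
    using assms unfolding step_def
  proof (elim disjE exE conjE bexE)
    fix x idx sndr i M L' ms Ds
    assume h: "recv_handler n t i M (loc st i) = (L', ms)"
      and st': "st' = \<lparr>loc = (loc st)(i := L'), net = (net st - {x}) \<union> copies C k i ms Ds\<rparr>"
    obtain m sn j sigs where M: "M = BUNDLE m sn j sigs" by (cases M)
    show ?thesis
    proof (cases "q = i \<and> recv_accepts n m sn j sigs (loc st i)")
      case True
      then show ?thesis using recv_handler_accepted[OF _ h[unfolded M]] st'
        unfolding recv_saved_def by auto
    next
      case False
      then show ?thesis using h st' M by (auto simp: recv_handler_BUNDLE)
    qed
  qed (auto simp: bcast_handler_eq)
  then show "saved (loc st q) T \<subseteq> saved (loc st' q) T"
    and "bcasts (loc st q) \<subseteq> bcasts (loc st' q)" by blast+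
qed

lemma step_removes_copy:
  assumes "step n t d C k st st'" and "(idx, sndr, q, M) \<in> net st" and "(idx, sndr, q, M) \<notin> net st'"
  shows "q \<in> C \<and> fst (recv_handler n t q M (loc st q)) = loc st' q"
  using assms unfolding step_def by (elim disjE exE conjE bexE) (auto split: prod.splits)

definition starts_with_bundle :: "'m msg list \<Rightarrow> 'm \<Rightarrow> nat \<Rightarrow> nat \<Rightarrow> nat \<Rightarrow> bool" where
  "starts_with_bundle ms m sn i p \<longleftrightarrow>
     ms \<noteq> [] \<and> (\<exists>X. ms ! 0 = BUNDLE m sn i (sigs_of X (m, sn, i)) \<and> p \<in> X \<and> i \<in> X)"

lemma bcast_handler_first_signature:
  assumes h: "bcast_handler p m' sn' L = (L', ms)"
    and before: "p \<notin> saved L (m, sn, i)" and after: "p \<in> saved L' (m, sn, i)"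
  shows "starts_with_bundle ms m sn i p"
proof -
  have "(m, sn, i) = (m', sn', p)" using h before after by (auto simp: bcast_handler_eq split: if_splits)
  then show ?thesis using h unfolding starts_with_bundle_def by (auto simp: bcast_handler_eq)
qed

lemma recv_handler_first_signature:
  assumes h: "recv_handler n t p M L = (L', ms)"
    and before: "p \<notin> saved L (m, sn, i)" and after: "p \<in> saved L' (m, sn, i)"
    and not_received: "(p, (m, sn, i)) \<notin> bundle_sigs M"
  shows "starts_with_bundle ms m sn i p"
proof -
  obtain m' sn' j sigs where M: "M = BUNDLE m' sn' j sigs" by (cases M)
  have acc: "recv_accepts n m' sn' j sigs L"
  proof (rule ccontr)
    assume "\<not> recv_accepts n m' sn' j sigs L"
    then have "L' = L" using h M by (simp add: recv_handler_BUNDLE)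
    then show False using before after by simp
  qed
  define A where "A = recv_saved n p m' sn' j sigs L"
  note eff = recv_handler_accepted[OF acc h[unfolded M], folded A_def]
  have T: "(m, sn, i) = (m', sn', j)" and pA: "p \<in> A"
    using before after eff(1) by (auto split: if_splits)
  then have "(sn', j) \<notin> signedsn L" "i \<in> A"
    using before not_received M acc unfolding A_def recv_saved_def recv_accepts_def
    by (auto split: if_splits)
  then show ?thesis using h M acc T pA unfolding starts_with_bundle_def
    by (auto simp: recv_handler_BUNDLE Let_def A_def)
qed

lemma recv_handler_signed_bundle:
  assumes h: "recv_handler n t q (BUNDLE m sn i (sigs_of X (m, sn, i))) L = (L', ms)"
    and fresh: "\<nexists>m'. (m', sn, i) \<in> delivered L"
    and "i \<in> X" "i < n" "p \<in> X" "p < n"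
  shows "p \<in> saved L' (m, sn, i)"
    and "(m, sn, i) \<notin> delivered L' \<Longrightarrow> 2 * card (saved L' (m, sn, i)) \<le> n + t"
    and "(sn, i) \<notin> signedsn L \<Longrightarrow> q \<in> saved L' (m, sn, i)"
proof -
  have acc: "recv_accepts n m sn i (sigs_of X (m, sn, i)) L"
    using assms unfolding recv_accepts_def sigs_of_def by auto
  note eff = recv_handler_accepted[OF acc h]
  show "p \<in> saved L' (m, sn, i)" and "(sn, i) \<notin> signedsn L \<Longrightarrow> q \<in> saved L' (m, sn, i)"
    using eff(1) assms unfolding recv_saved_def sigs_of_def by auto
  show "(m, sn, i) \<notin> delivered L' \<Longrightarrow> 2 * card (saved L' (m, sn, i)) \<le> n + t"
    using eff(1,4) by (auto split: if_splits)
qed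

lemma ex_last_before_change:
  fixes P :: "nat \<Rightarrow> bool"
  assumes "P a" and "\<not> P b" and "a \<le> b"
  shows "\<exists>k\<ge>a. P k \<and> \<not> P (Suc k)"
  using assms(3,2) by (induction b rule: dec_induct) (use assms(1) in auto)

lemma double_counting:
  assumes "finite S" and "S \<noteq> {}" and "\<forall>p\<in>S. a \<le> card {q\<in>S. R p q}"
  shows "\<exists>q\<in>S. a \<le> card {p\<in>S. R p q}"
proof (rule ccontr)
  assume "\<not> ?thesis"
  then have "(\<Sum>q\<in>S. card {p\<in>S. R p q}) < (\<Sum>q\<in>S. a)"
    using assms(1,2) by (intro sum_strict_mono) auto
  also have "\<dots> \<le> (\<Sum>p\<in>S. card {q\<in>S. R p q})"
    using assms(3) by (intro sum_mono) auto
  also have "\<dots> = (\<Sum>q\<in>S. card {p\<in>S. R p q})"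
    using assms(1) by (intro sum_multicount_gen) auto
  finally show False by simp
qed

locale mbrb_execution =
  fixes n t d :: nat and C :: "nat set" and s :: "nat \<Rightarrow> 'm gstate"
  assumes exec: "mbrb_exec n t d C s"
begin

lemma correct_below_n: "C \<subseteq> {..<n}"
  and card_correct: "n - t \<le> card C" "d < card C"
  and exec_init: "s 0 = gstate0"
  and exec_step: "step n t d C k (s k) (s (Suc k))"
  using exec unfolding mbrb_exec_def by simp_all

lemma finite_correct: "finite C"
  using correct_below_n finite_subset by blast

lemma exec_fair: "x \<in> net (s k) \<Longrightarrow> fst (snd x) \<in> C \<Longrightarrow> \<exists>k'\<ge>k. x \<notin> net (s k')"
  using exec unfolding mbrb_exec_def by blast

lemma exec_inv: "mbrb_inv n t C (s k)"
  by (induction k) (simp_all add: exec_init mbrb_inv_gstate0 mbrb_inv_step[OF _ correct_below_n exec_step])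

lemma finite_saved: assumes "q \<in> C" shows "finite (saved (loc (s k) q) T)"
  using saved_range[OF exec_inv assms] by (rule finite_subset) simp

lemma saved_mono: "a \<le> b \<Longrightarrow> saved (loc (s a) q) T \<subseteq> saved (loc (s b) q) T"
  by (induction b rule: dec_induct) (use step_local_mono(1)[OF exec_step] in blast)+

lemma bcasts_mono: "a \<le> b \<Longrightarrow> bcasts (loc (s a) q) \<subseteq> bcasts (loc (s b) q)"
  by (induction b rule: dec_induct) (use step_local_mono(2)[OF exec_step] in blast)+

lemma copy_received:
  assumes x: "(idx, p, q, M) \<in> net (s k)" and p: "p \<in> C"
  shows "\<exists>k'. q \<in> C \<and> fst (recv_handler n t q M (loc (s k') q)) = loc (s (Suc k')) q"
proof -
  obtain k' where "k \<le> k'" "(idx, p, q, M) \<notin> net (s k')" using exec_fair[OF x] p by auto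
  then obtain k1 where "(idx, p, q, M) \<in> net (s k1)" "(idx, p, q, M) \<notin> net (s (Suc k1))"
    using ex_last_before_change[where P = "\<lambda>k. (idx, p, q, M) \<in> net (s k)"] x by blast
  then show ?thesis using step_removes_copy[OF exec_step] by blast
qed

lemma first_signature_broadcast:
  assumes p: "p \<in> C"
    and before: "p \<notin> saved (loc (s k) p) (m, sn, i)" and after: "p \<in> saved (loc (s (Suc k)) p) (m, sn, i)"
  shows "\<exists>ms Ds. adv_ok C d ms Ds \<and> copies C k p ms Ds \<subseteq> net (s (Suc k)) \<and> starts_with_bundle ms m sn i p"
  using exec_step[of k] unfolding step_def
proof (elim disjE exE conjE bexE)
  fix i' m' sn' L' ms Ds
  assume h: "bcast_handler i' m' sn' (loc (s k) i') = (L', ms)" and adv: "adv_ok C d ms Ds"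
    and s': "s (Suc k) = \<lparr>loc = (loc (s k))(i' := L'), net = net (s k) \<union> copies C k i' ms Ds\<rparr>"
  have "i' = p" using before after s' by (cases "i' = p") auto
  then have "starts_with_bundle ms m sn i p"
    using before after s' h by (auto intro: bcast_handler_first_signature)
  then show ?thesis using adv s' \<open>i' = p\<close> by auto
next
  fix x idx sndr i' M L' ms Ds
  assume x: "x \<in> net (s k)" "x = (idx, sndr, i', M)"
    and h: "recv_handler n t i' M (loc (s k) i') = (L', ms)" and adv: "adv_ok C d ms Ds"
    and s': "s (Suc k) = \<lparr>loc = (loc (s k))(i' := L'), net = (net (s k) - {x}) \<union> copies C k i' ms Ds\<rparr>"
  have "i' = p" using before after s' by (cases "i' = p") auto
  have "(p, (m, sn, i)) \<notin> bundle_sigs M"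
    using net_signer_signed[OF exec_inv x(1) p, of "(m, sn, i)"] before x(2) by auto
  then have "starts_with_bundle ms m sn i p"
    using before after s' h \<open>i' = p\<close> by (auto intro: recv_handler_first_signature)
  then show ?thesis using adv s' \<open>i' = p\<close> by auto
qed (use before after in auto)

end

locale mbrb_broadcast = mbrb_execution +
  fixes i :: nat and m :: 'm and sn kb :: nat
  assumes sender_correct: "i \<in> C" and broadcast: "(m, sn) \<in> bcasts (loc (s kb) i)"
begin

lemma sender_signed_only_m:
  assumes q: "q \<in> C" and signed: "i \<in> saved (loc (s k) q) (m', sn, i)"
  shows "m' = m"
proof -
  let ?k = "max k kb"
  have "i \<in> saved (loc (s k) i) (m', sn, i)"
    by (rule saved_signer_signed[OF exec_inv q sender_correct signed])
  then have "(m', sn) \<in> bcasts (loc (s k) i)"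
    using saved_own_bcast[OF exec_inv sender_correct] by blast
  then have "(m', sn) \<in> bcasts (loc (s ?k) i)" "(m, sn) \<in> bcasts (loc (s ?k) i)"
    using bcasts_mono[of k ?k i] bcasts_mono[of kb ?k i] broadcast by auto
  then show ?thesis using bcast_sn_unique[OF exec_inv sender_correct] by blast
qed

lemma delivered_only_m: "q \<in> C \<Longrightarrow> (m', sn, i) \<in> delivered (loc (s k) q) \<Longrightarrow> m' = m"
  using delivered_sender_saved[OF exec_inv] sender_signed_only_m by blast

definition signers :: "nat set" where
  "signers = {p \<in> C. \<exists>k. p \<in> saved (loc (s k) p) (m, sn, i)}"

lemma finite_signers: "finite signers"
  using finite_correct unfolding signers_def by simp

lemma sender_in_signers: "i \<in> signers"
  using bcast_saved_own[OF exec_inv sender_correct broadcast] sender_correct unfolding signers_def by blast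

lemma bundle_receiver_signs:
  assumes undelivered: "\<forall>q\<in>C. \<forall>k. (m, sn, i) \<notin> delivered (loc (s k) q)"
    and x: "(idx, p, q, BUNDLE m sn i (sigs_of X (m, sn, i))) \<in> net (s k)"
    and p: "p \<in> C" and "p \<in> X" and "i \<in> X"
  shows "q \<in> signers \<and>
    (\<exists>k. p \<in> saved (loc (s k) q) (m, sn, i) \<and> 2 * card (saved (loc (s k) q) (m, sn, i)) \<le> n + t)"
proof -
  let ?T = "(m, sn, i)"
  obtain k1 where q: "q \<in> C"
    and rcv: "fst (recv_handler n t q (BUNDLE m sn i (sigs_of X ?T)) (loc (s k1) q)) = loc (s (Suc k1)) q"
    using copy_received[OF x p] by blast
  obtain L' ms where h: "recv_handler n t q (BUNDLE m sn i (sigs_of X ?T)) (loc (s k1) q) = (L', ms)"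
    by fastforce
  have L': "L' = loc (s (Suc k1)) q" using rcv h by simp
  have fresh: "\<nexists>m'. (m', sn, i) \<in> delivered (loc (s k1) q)"
    using undelivered delivered_only_m q by blast
  have "i < n" "p < n" using correct_below_n sender_correct p by auto
  note recv = recv_handler_signed_bundle[OF h fresh \<open>i \<in> X\<close> \<open>i < n\<close> \<open>p \<in> X\<close> \<open>p < n\<close>]
  have "\<exists>k. q \<in> saved (loc (s k) q) ?T"
  proof (cases "(sn, i) \<in> signedsn (loc (s k1) q)")
    case True
    (* p_i signs one message per sequence number, so q has signed (m, sn, i) itself *)
    then obtain m' where "q \<in> saved (loc (s k1) q) (m', sn, i)" "i \<in> saved (loc (s k1) q) (m', sn, i)"
      using signedsn_saved[OF exec_inv q] by blast
    then show ?thesis using sender_signed_only_m[OF q] by blast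
  next
    case False
    then show ?thesis using recv(3) L' by blast
  qed
  then show ?thesis using recv(1,2) L' undelivered q unfolding signers_def by blast
qed

lemma signature_spread:
  assumes undelivered: "\<forall>q\<in>C. \<forall>k. (m, sn, i) \<notin> delivered (loc (s k) q)" and p: "p \<in> signers"
  shows "\<exists>Q\<subseteq>signers. card C - d \<le> card Q \<and>
    (\<forall>q\<in>Q. \<exists>k. p \<in> saved (loc (s k) q) (m, sn, i) \<and> 2 * card (saved (loc (s k) q) (m, sn, i)) \<le> n + t)"
proof -
  let ?T = "(m, sn, i)"
  obtain kp where pC: "p \<in> C" and kp: "p \<in> saved (loc (s kp) p) ?T"
    using p unfolding signers_def by blast
  have "p \<notin> saved (loc (s 0) p) ?T" using exec_init by (simp add: gstate0_def lstate0_def)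
  then obtain k0 where "p \<notin> saved (loc (s k0) p) ?T" "p \<in> saved (loc (s (Suc k0)) p) ?T"
    using ex_last_before_change[where P = "\<lambda>k. p \<notin> saved (loc (s k) p) ?T"] kp by blast
  then obtain ms Ds where adv: "adv_ok C d ms Ds" and sent: "copies C k0 p ms Ds \<subseteq> net (s (Suc k0))"
    and "starts_with_bundle ms m sn i p"
    using first_signature_broadcast[OF pC] by blast
  then obtain X where "ms \<noteq> []" and first: "ms ! 0 = BUNDLE m sn i (sigs_of X ?T)" and "p \<in> X" "i \<in> X"
    unfolding starts_with_bundle_def by auto
  define Q where "Q = C - Ds ! 0"
  have "Ds ! 0 \<subseteq> C" "card (Ds ! 0) \<le> d"
    using adv \<open>ms \<noteq> []\<close> unfolding adv_ok_def by (auto dest: nth_mem)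
  then have "card C - d \<le> card Q"
    unfolding Q_def using finite_correct by (simp add: card_Diff_subset finite_subset)
  moreover have receivers: "q \<in> signers \<and>
      (\<exists>k. p \<in> saved (loc (s k) q) ?T \<and> 2 * card (saved (loc (s k) q) ?T) \<le> n + t)"
    if "q \<in> Q" for q
  proof -
    have "((k0, 0), p, q, ms ! 0) \<in> net (s (Suc k0))"
      using sent that \<open>ms \<noteq> []\<close> unfolding Q_def copies_def by auto
    then show ?thesis
      using bundle_receiver_signs[OF undelivered _ pC \<open>p \<in> X\<close> \<open>i \<in> X\<close>] first by simp
  qed
  moreover have "Q \<subseteq> signers" using receivers by blast
  ultimately show ?thesis using receivers by (intro exI[of _ Q]) simp
qed

lemma eventually_signers_saved:
  assumes undelivered: "\<forall>q\<in>C. \<forall>k. (m, sn, i) \<notin> delivered (loc (s k) q)"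
  shows "\<exists>K. \<forall>p\<in>signers. card C - d \<le> card {q \<in> signers. p \<in> saved (loc (s K) q) (m, sn, i)}"
proof -
  have "\<forall>p\<in>signers. eventually (\<lambda>K. card C - d \<le> card {q \<in> signers. p \<in> saved (loc (s K) q) (m, sn, i)}) sequentially"
  proof
    fix p assume "p \<in> signers"
    then obtain Q where Q: "Q \<subseteq> signers" "card C - d \<le> card Q"
      and saved: "\<forall>q\<in>Q. \<exists>k. p \<in> saved (loc (s k) q) (m, sn, i) \<and>
                    2 * card (saved (loc (s k) q) (m, sn, i)) \<le> n + t"
      using signature_spread[OF undelivered] by blast
    have "\<forall>q\<in>Q. eventually (\<lambda>K. p \<in> saved (loc (s K) q) (m, sn, i)) sequentially"
    proof
      fix q assume "q \<in> Q"
      then obtain k where k: "p \<in> saved (loc (s k) q) (m, sn, i)" using saved by blast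
      show "eventually (\<lambda>K. p \<in> saved (loc (s K) q) (m, sn, i)) sequentially"
      proof (rule eventually_sequentiallyI)
        fix K assume "k \<le> K"
        then show "p \<in> saved (loc (s K) q) (m, sn, i)" using saved_mono k by blast
      qed
    qed
    then have "eventually (\<lambda>K. \<forall>q\<in>Q. p \<in> saved (loc (s K) q) (m, sn, i)) sequentially"
      using finite_subset[OF Q(1) finite_signers] by (intro eventually_ball_finite)
    then show "eventually (\<lambda>K. card C - d \<le> card {q \<in> signers. p \<in> saved (loc (s K) q) (m, sn, i)}) sequentially"
    proof (rule eventually_mono)
      fix K assume "\<forall>q\<in>Q. p \<in> saved (loc (s K) q) (m, sn, i)"
      then have "card Q \<le> card {q \<in> signers. p \<in> saved (loc (s K) q) (m, sn, i)}"
        using Q(1) finite_signers by (intro card_mono) auto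
      then show "card C - d \<le> card {q \<in> signers. p \<in> saved (loc (s K) q) (m, sn, i)}"
        using Q(2) by linarith
    qed
  qed
  then have "eventually (\<lambda>K. \<forall>p\<in>signers. card C - d \<le> card {q \<in> signers. p \<in> saved (loc (s K) q) (m, sn, i)}) sequentially"
    using finite_signers by (intro eventually_ball_finite)
  then show ?thesis by (auto simp: eventually_sequentially)
qed

(* Rules out the escape clause card \<le> 1 of above_threshold_delivered. *)
lemma two_le_threshold:
  assumes undelivered: "\<forall>q\<in>C. \<forall>k. (m, sn, i) \<notin> delivered (loc (s k) q)"
  shows "2 \<le> n + t"
proof -
  obtain Q where "card C - d \<le> card Q" "Q \<subseteq> signers"
    and Q: "\<forall>q\<in>Q. \<exists>k. i \<in> saved (loc (s k) q) (m, sn, i) \<and> 2 * card (saved (loc (s k) q) (m, sn, i)) \<le> n + t"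
    using signature_spread[OF undelivered sender_in_signers] by blast
  then have "Q \<noteq> {}" using card_correct(2) by auto
  then obtain q where "q \<in> Q" "q \<in> C" using \<open>Q \<subseteq> signers\<close> unfolding signers_def by blast
  then obtain k where "i \<in> saved (loc (s k) q) (m, sn, i)" "2 * card (saved (loc (s k) q) (m, sn, i)) \<le> n + t"
    using Q by blast
  moreover have "finite (saved (loc (s k) q) (m, sn, i))" using finite_saved \<open>q \<in> C\<close> by blast
  ultimately show ?thesis using card_gt_0_iff[of "saved (loc (s k) q) (m, sn, i)"] by auto
qed

end

theorem mainTheorem5:
  fixes s :: "nat \<Rightarrow> 'm gstate"
  assumes "n > 3 * t + 2 * d"
    and "mbrb_exec n t d C s"
    and "i \<in> C"
    and "(m, sn) \<in> bcasts (loc (s k) i)"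
  shows "\<exists>j\<in>C. \<exists>k'. (m, sn, i) \<in> delivered (loc (s k') j)"
proof (rule ccontr)
  interpret mbrb_broadcast n t d C s i m sn k
    using assms(2-4) by unfold_locales
  let ?T = "(m, sn, i)"
  assume "\<not> ?thesis"
  then have undelivered: "\<forall>q\<in>C. \<forall>k. ?T \<notin> delivered (loc (s k) q)" by blast
  obtain K where "\<forall>p\<in>signers. card C - d \<le> card {q \<in> signers. p \<in> saved (loc (s K) q) ?T}"
    using eventually_signers_saved[OF undelivered] by blast
  then obtain q where q: "q \<in> signers" and many: "card C - d \<le> card {p \<in> signers. p \<in> saved (loc (s K) q) ?T}"
    using double_counting[of signers "card C - d" "\<lambda>p q. p \<in> saved (loc (s K) q) ?T"]
      finite_signers sender_in_signers by blast
  have qC: "q \<in> C" using q unfolding signers_def by blast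
  have "card {p \<in> signers. p \<in> saved (loc (s K) q) ?T} \<le> card (saved (loc (s K) q) ?T)"
    using finite_saved[OF qC] by (intro card_mono) auto
  moreover have "n + t < 2 * (card C - d)" using assms(1) card_correct by linarith
  ultimately have "n + t < 2 * card (saved (loc (s K) q) ?T)" using many by linarith
  moreover have "\<nexists>m'. (m', sn, i) \<in> delivered (loc (s K) q)"
    using undelivered delivered_only_m qC by blast
  ultimately have "card (saved (loc (s K) q) ?T) \<le> 1"
    using above_threshold_delivered[OF exec_inv qC] by blast
  then show False
    using \<open>n + t < 2 * card (saved (loc (s K) q) ?T)\<close> two_le_threshold[OF undelivered] by linarith
qed

end
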